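(* Let $(\mathcal{X},\mathcal{Y},\mathcal{I})$ be a $(v,b,r,\lambda)$-RPBD. Suppose there exists an integer $k$ such that $$[b:r:\lambda]=\left[\frac{v}{k}\frac{v-1}{k-1}:\frac{v-1}{k-1}:1\right].$$ Then $|\mathcal{I}^y|=k$ for every $y\in\mathcal{Y}$, and hence $(\mathcal{X},\mathcal{Y},\mathcal{I})$ is a $(v,b,r,k,\lambda)$-block design.
   Context: For an incidence structure $(\mathcal{X},\mathcal{Y},\mathcal{I})$ with $\mathcal{I}\subset\mathcal{X}\times\mathcal{Y}$, $\mathcal{I}_x=\{y:(x,y)\in\mathcal{I}\}$ and $\mathcal{I}^y=\{x:(x,y)\in\mathcal{I}\}$. For integers $v>0$, $b>r>\lambda\ge0$, a $(v,b,r,\lambda)$-RPBD is an incidence structure with $\mathcal{X},\mathcal{Y}$ nonempty finite, $|\mathcal{X}|=v$, $|\mathcal{Y}|=b$, $|\mathcal{I}_x|=r$ for all $x$, $|\mathcal{I}_x\cap\mathcal{I}_{x'}|=\lambda$ for all $x\neq x'$. A $(v,b,r,k,\lambda)$-block design is such an incidence structure that in addition satisfies $|\mathcal{I}^y|=k$ for all $y$ (with $v>k>0$). The ratio equality $[a_1:a_2:a_3]=[c_1:c_2:c_3]$ means $(a_1,a_2,a_3)=t(c_1,c_2,c_3)$ for some $t>0$. *)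

theory Defs
  imports Complex_Main
begin

definition row :: "('a \<times> 'b) set \<Rightarrow> 'a \<Rightarrow> 'b set" where
  "row I x = {y. (x, y) \<in> I}"

definition col :: "('a \<times> 'b) set \<Rightarrow> 'b \<Rightarrow> 'a set" where
  "col I y = {x. (x, y) \<in> I}"

definition RPBD :: "'a set \<Rightarrow> 'b set \<Rightarrow> ('a \<times> 'b) set \<Rightarrow> nat \<Rightarrow> nat \<Rightarrow> nat \<Rightarrow> nat \<Rightarrow> bool" where
  "RPBD X Y I v b r lam \<longleftrightarrow>
     I \<subseteq> X \<times> Y \<and> finite X \<and> finite Y \<and> X \<noteq> {} \<and> Y \<noteq> {} \<and>
     v > 0 \<and> b > r \<and> r > lam \<and> card X = v \<and> card Y = b \<and>
     (\<forall>x\<in>X. card (row I x) = r) \<and>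
     (\<forall>x\<in>X. \<forall>x'\<in>X. x \<noteq> x' \<longrightarrow> card (row I x \<inter> row I x') = lam)"

definition block_design :: "'a set \<Rightarrow> 'b set \<Rightarrow> ('a \<times> 'b) set \<Rightarrow> nat \<Rightarrow> nat \<Rightarrow> nat \<Rightarrow> nat \<Rightarrow> nat \<Rightarrow> bool" where
  "block_design X Y I v b r k lam \<longleftrightarrow>
     RPBD X Y I v b r lam \<and> v > k \<and> k > 0 \<and> (\<forall>y\<in>Y. card (col I y) = k)"

definition ratio_eq3 :: "real \<Rightarrow> real \<Rightarrow> real \<Rightarrow> real \<Rightarrow> real \<Rightarrow> real \<Rightarrow> bool" where
  "ratio_eq3 a1 a2 a3 c1 c2 c3 \<longleftrightarrow> (\<exists>t>0. a1 = t * c1 \<and> a2 = t * c2 \<and> a3 = t * c3)"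

end

theory Submission
  imports Defs
begin

text \<open>Counting incidences and pairs of incidences through each block gives
  \<open>\<Sum>\<^sub>y |I\<^sup>y| = v r\<close> and \<open>\<Sum>\<^sub>y |I\<^sup>y|\<^sup>2 = v (r + (v - 1) \<lambda>)\<close>.
  The ratio hypothesis amounts to \<open>r (k - 1) = \<lambda> (v - 1)\<close> and \<open>b k = v r\<close>,
  so both moments coincide with those of \<open>b\<close> blocks of size \<open>k\<close>; hence
  \<open>\<Sum>\<^sub>y (|I\<^sup>y| - k)\<^sup>2 = 0\<close>.\<close>

lemma card_col_eq_sum_of_bool:
  assumes "I \<subseteq> X \<times> Y" and "finite X"
  shows "card (col I y) = (\<Sum>x\<in>X. of_bool ((x, y) \<in> I))"
proof -
  have "col I y = X \<inter> {x. (x, y) \<in> I}"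
    using assms(1) unfolding col_def by auto
  then show ?thesis
    using assms(2) by simp
qed

lemma card_row_eq_sum_of_bool:
  assumes "I \<subseteq> X \<times> Y" and "finite Y"
  shows "card (row I x) = (\<Sum>y\<in>Y. of_bool ((x, y) \<in> I))"
proof -
  have "row I x = Y \<inter> {y. (x, y) \<in> I}"
    using assms(1) unfolding row_def by auto
  then show ?thesis
    using assms(2) by simp
qed

lemma card_row_Int_row_eq_sum_of_bool:
  assumes "I \<subseteq> X \<times> Y" and "finite Y"
  shows "card (row I x \<inter> row I x') = (\<Sum>y\<in>Y. of_bool ((x, y) \<in> I \<and> (x', y) \<in> I))"
proof -
  have "row I x \<inter> row I x' = Y \<inter> {y. (x, y) \<in> I \<and> (x', y) \<in> I}"
    using assms(1) unfolding row_def by auto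
  then show ?thesis
    using assms(2) by simp
qed

lemma sum_card_col_eq_sum_card_row:
  assumes "I \<subseteq> X \<times> Y" and "finite X" and "finite Y"
  shows "(\<Sum>y\<in>Y. card (col I y)) = (\<Sum>x\<in>X. card (row I x))"
proof -
  have "(\<Sum>y\<in>Y. card (col I y)) = (\<Sum>y\<in>Y. \<Sum>x\<in>X. of_bool ((x, y) \<in> I))"
    using card_col_eq_sum_of_bool[OF assms(1,2)] by simp
  also have "\<dots> = (\<Sum>x\<in>X. \<Sum>y\<in>Y. of_bool ((x, y) \<in> I))"
    by (rule sum.swap)
  also have "\<dots> = (\<Sum>x\<in>X. card (row I x))"
    using card_row_eq_sum_of_bool[OF assms(1,3)] by simp
  finally show ?thesis .
qed

lemma sum_card_col_squared:
  assumes "I \<subseteq> X \<times> Y" and "finite X" and "finite Y"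
  shows "(\<Sum>y\<in>Y. (card (col I y))\<^sup>2) = (\<Sum>x\<in>X. \<Sum>x'\<in>X. card (row I x \<inter> row I x'))"
proof -
  have "(\<Sum>y\<in>Y. (card (col I y))\<^sup>2)
      = (\<Sum>y\<in>Y. \<Sum>x\<in>X. \<Sum>x'\<in>X. of_bool ((x, y) \<in> I \<and> (x', y) \<in> I))"
    using card_col_eq_sum_of_bool[OF assms(1,2)]
    by (simp add: power2_eq_square sum_product of_bool_conj)
  also have "\<dots> = (\<Sum>x\<in>X. \<Sum>y\<in>Y. \<Sum>x'\<in>X. of_bool ((x, y) \<in> I \<and> (x', y) \<in> I))"
    by (rule sum.swap)
  also have "\<dots> = (\<Sum>x\<in>X. \<Sum>x'\<in>X. \<Sum>y\<in>Y. of_bool ((x, y) \<in> I \<and> (x', y) \<in> I))"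
    by (rule sum.cong[OF refl], rule sum.swap)
  also have "\<dots> = (\<Sum>x\<in>X. \<Sum>x'\<in>X. card (row I x \<inter> row I x'))"
    using card_row_Int_row_eq_sum_of_bool[OF assms(1,3)] by simp
  finally show ?thesis .
qed

lemma RPBD_sum_card_col:
  assumes "RPBD X Y I v b r lam"
  shows "(\<Sum>y\<in>Y. card (col I y)) = v * r"
proof -
  have "(\<Sum>y\<in>Y. card (col I y)) = (\<Sum>x\<in>X. card (row I x))"
    using assms sum_card_col_eq_sum_card_row unfolding RPBD_def by blast
  also have "\<dots> = v * r"
    using assms unfolding RPBD_def by simp
  finally show ?thesis .
qed

lemma RPBD_sum_card_row_Int_row:
  assumes "RPBD X Y I v b r lam" and "x \<in> X"
  shows "(\<Sum>x'\<in>X. card (row I x \<inter> row I x')) = r + (v - 1) * lam"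
proof -
  have finite: "finite X" and card: "card X = v"
    and row: "card (row I x) = r"
    and pair: "\<And>x'. x' \<in> X - {x} \<Longrightarrow> card (row I x \<inter> row I x') = lam"
    using assms unfolding RPBD_def by auto
  have "(\<Sum>x'\<in>X. card (row I x \<inter> row I x'))
      = card (row I x) + (\<Sum>x'\<in>X - {x}. card (row I x \<inter> row I x'))"
    using finite assms(2) by (simp add: sum.remove)
  also have "\<dots> = r + (v - 1) * lam"
    using row pair finite card assms(2) by simp
  finally show ?thesis .
qed

lemma RPBD_sum_card_col_squared:
  assumes "RPBD X Y I v b r lam"
  shows "(\<Sum>y\<in>Y. (card (col I y))\<^sup>2) = v * (r + (v - 1) * lam)"
proof -
  have "(\<Sum>y\<in>Y. (card (col I y))\<^sup>2) = (\<Sum>x\<in>X. \<Sum>x'\<in>X. card (row I x \<inter> row I x'))"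
    using assms sum_card_col_squared unfolding RPBD_def by blast
  also have "\<dots> = (\<Sum>x\<in>X. r + (v - 1) * lam)"
    using RPBD_sum_card_row_Int_row[OF assms] by simp
  also have "\<dots> = v * (r + (v - 1) * lam)"
    using assms unfolding RPBD_def by simp
  finally show ?thesis .
qed

lemma sum_squares_eq_imp_constant:
  fixes c :: "'a \<Rightarrow> real" and m :: real
  assumes "finite A"
    and "(\<Sum>y\<in>A. c y) = card A * m"
    and "(\<Sum>y\<in>A. (c y)\<^sup>2) = card A * m\<^sup>2"
    and "y \<in> A"
  shows "c y = m"
proof -
  have "(\<Sum>y\<in>A. (c y - m)\<^sup>2) = (\<Sum>y\<in>A. (c y)\<^sup>2 - 2 * m * c y + m\<^sup>2)"
    by (simp add: power2_diff algebra_simps)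
  also have "\<dots> = (\<Sum>y\<in>A. (c y)\<^sup>2) - 2 * m * (\<Sum>y\<in>A. c y) + card A * m\<^sup>2"
    by (simp add: sum.distrib sum_subtractf sum_distrib_left)
  also have "\<dots> = 0"
    using assms(2,3) by (simp add: power2_eq_square)
  finally have "(\<Sum>y\<in>A. (c y - m)\<^sup>2) = 0" .
  then have "(c y - m)\<^sup>2 = 0"
    using assms(1,4) by (simp add: sum_nonneg_eq_0_iff)
  then show ?thesis
    by simp
qed

lemma ratio_eq3_block_design_parameters:
  fixes b r lam v k :: real
  assumes "ratio_eq3 b r lam (v / k * ((v - 1) / (k - 1))) ((v - 1) / (k - 1)) 1"
    and "r < b" and "lam < r" and "1 \<le> v"
  shows "r * (k - 1) = lam * (v - 1)" and "b * k = v * r" and "1 < k" and "k < v"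
proof -
  obtain t where "t > 0" and b: "b = t * (v / k * ((v - 1) / (k - 1)))"
    and r: "r = t * ((v - 1) / (k - 1))" and lam: "lam = t"
    using assms(1) unfolding ratio_eq3_def by auto
  have "0 < r" and "0 < b"
    using assms(2,3) lam \<open>t > 0\<close> by simp_all
  have "k \<noteq> 1"
    using r \<open>0 < r\<close> by auto
  \<comment> \<open>for \<open>k = 0\<close> the division by zero would make \<open>b = 0\<close>\<close>
  have "k \<noteq> 0"
    using b \<open>0 < b\<close> by auto
  show rk: "r * (k - 1) = lam * (v - 1)"
    using r lam \<open>k \<noteq> 1\<close> by (simp add: field_simps)
  show "b * k = v * r"
  proof -
    have "b = v / k * r"
      unfolding b r by (rule mult.left_commute)
    then show ?thesis
      using \<open>k \<noteq> 0\<close> by simp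
  qed
  have "0 \<le> r * (k - 1)"
    using rk lam \<open>t > 0\<close> assms(4) by simp
  then show "1 < k"
    using \<open>0 < r\<close> \<open>k \<noteq> 1\<close> by (simp add: zero_le_mult_iff)
  then have "0 < lam * (v - 1)"
    using rk \<open>0 < r\<close> by (metis diff_gt_0_iff_gt mult_pos_pos)
  then have "1 < v"
    using assms(4) by (simp add: zero_less_mult_iff)
  then have "lam * (v - 1) < r * (v - 1)"
    using assms(3) by simp
  then have "r * (k - 1) < r * (v - 1)"
    using rk by simp
  then show "k < v"
    using \<open>0 < r\<close> by simp
qed

theorem proposition3:
  fixes X :: "'a set" and Y :: "'b set" and I :: "('a \<times> 'b) set"
    and v b r lam :: nat and k :: int
  assumes "RPBD X Y I v b r lam"
    and "ratio_eq3 (real b) (real r) (real lam)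
           ((real v / real_of_int k) * ((real v - 1) / (real_of_int k - 1)))
           ((real v - 1) / (real_of_int k - 1)) 1"
  shows "(\<forall>y\<in>Y. int (card (col I y)) = k) \<and> block_design X Y I v b r (nat k) lam"
proof -
  have "finite Y" and "card Y = b" and "r < b" and "lam < r" and "1 \<le> v"
    using assms(1) unfolding RPBD_def by auto
  then have "real r < real b" and "real lam < real r" and "1 \<le> real v"
    by simp_all
  note parameters = ratio_eq3_block_design_parameters[OF assms(2) this]
  have sum: "(\<Sum>y\<in>Y. real (card (col I y))) = real (card Y) * k"
    using RPBD_sum_card_col[OF assms(1), THEN arg_cong[where f = real]] parameters(2) \<open>card Y = b\<close>
    by simp
  have "(\<Sum>y\<in>Y. (real (card (col I y)))\<^sup>2) = real v * (real r + (real v - 1) * real lam)"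
    using RPBD_sum_card_col_squared[OF assms(1), THEN arg_cong[where f = real]] \<open>1 \<le> v\<close>
    by (simp add: of_nat_diff)
  also have "\<dots> = real v * (real r + real r * (k - 1))"
    using parameters(1) by (simp add: mult.commute)
  also have "\<dots> = real v * real r * k"
    by (simp add: algebra_simps)
  also have "\<dots> = real (card Y) * (real_of_int k)\<^sup>2"
    using parameters(2) \<open>card Y = b\<close> by (simp add: power2_eq_square)
  finally have sum_squares: "(\<Sum>y\<in>Y. (real (card (col I y)))\<^sup>2) = real (card Y) * (real_of_int k)\<^sup>2" .
  have col: "int (card (col I y)) = k" if "y \<in> Y" for y
    using sum_squares_eq_imp_constant[OF \<open>finite Y\<close> sum sum_squares that] by linarith
  moreover have "nat k < v" and "0 < nat k"
    using parameters(3,4) by linarith+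
  ultimately show ?thesis
    using assms(1) unfolding block_design_def by (auto simp flip: col)
qed

end
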